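(* Let $\mathbf{X}$ be a Banach space, $\mathcal{S}\subset\mathbf{X}$, and let $\mathbb{P}$ be a Borel probability measure on $\mathcal{S}$ of growth order $s_0\in[0,\infty)$. Then $s_0\ge s^\ast_{\mathbf{X}}(\mathcal{S})$.
   Context: Let $(\mathbf{X},\|\cdot\|_{\mathbf{X}})$ be a real Banach space and $\mathcal{S}\subset\mathbf{X}$. A codec is a sequence $((E_R,D_R))_{R\in\mathbb{N}}$ of maps $E_R:\mathcal{S}\to\{0,1\}^R$, $D_R:\{0,1\}^R\to\mathbf{X}$; the distortion is $\delta_{\mathcal{S},\mathbf{X}}(E_R,D_R)=\sup_{\mathbf{x}\in\mathcal{S}}\|\mathbf{x}-D_R(E_R(\mathbf{x}))\|_{\mathbf{X}}$, and $s^\ast_{\mathbf{X}}(\mathcal{S})=\sup\{s\ge0:\exists\text{ codec with }\sup_RR^s\delta_{\mathcal{S},\mathbf{X}}(E_R,D_R)<\infty\}\in[0,\infty]$. $\mathcal{S}$ carries the trace of the Borel $\sigma$-algebra of $\mathbf{X}$. $\mathbb{P}$ has (logarithmic) growth order $s_0$ w.r.t. $\mathbf{X}$ if for every $s>s_0$ there exist $\varepsilon_0,c>0$ with $\mathbb{P}(\mathcal{S}\cap\mathcal{B}(\mathbf{x},\varepsilon;\mathbf{X}))\le2^{-c\varepsilon^{-1/s}}$ for all $\mathbf{x}\in\mathbf{X}$, $\varepsilon\in(0,\varepsilon_0)$ ($\mathcal{B}$ = closed ball). *)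

theory Defs
  imports "HOL-Probability.Probability"
begin

definition is_codec :: "'a set \<Rightarrow> (nat \<Rightarrow> 'a \<Rightarrow> bool list) \<Rightarrow> bool" where
  "is_codec S E \<longleftrightarrow> (\<forall>R. \<forall>x\<in>S. length (E R x) = R)"

definition distortion ::
  "'a::real_normed_vector set \<Rightarrow> (nat \<Rightarrow> 'a \<Rightarrow> bool list) \<Rightarrow> (nat \<Rightarrow> bool list \<Rightarrow> 'a) \<Rightarrow> nat \<Rightarrow> ereal" where
  "distortion S E D R = (SUP x\<in>S. ereal (norm (x - D R (E R x))))"

text \<open>Optimal compression exponent s*_X(S) in [0,\<infinity>] (sup of the empty set read as 0).\<close>
definition optimal_exponent :: "'a::real_normed_vector set \<Rightarrow> ereal" where
  "optimal_exponent S = Sup (insert 0 {ereal s | s. s \<ge> 0 \<and>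
     (\<exists>E D. is_codec S E \<and>
        (\<exists>C::real. \<forall>R::nat. R \<ge> 1 \<longrightarrow> ereal (real R powr s) * distortion S E D R \<le> ereal C))})"

definition has_growth_order :: "'a::real_normed_vector set \<Rightarrow> 'a measure \<Rightarrow> real \<Rightarrow> bool" where
  "has_growth_order S P s0 \<longleftrightarrow> (\<forall>s>s0. \<exists>\<epsilon>0>0. \<exists>c>0. \<forall>x \<epsilon>. 0 < \<epsilon> \<and> \<epsilon> < \<epsilon>0 \<longrightarrow>
      measure P (S \<inter> cball x \<epsilon>) \<le> 2 powr (- c * \<epsilon> powr (-1 / s)))"

end

theory Submission
  imports Defs "HOL-Real_Asymp.Real_Asymp"
begin

text \<open>A codec with R bits and distortion at most e covers S by the 2^R closed balls of radius e
  around the decoded points. If every such ball has mass at most 2^(-c e^(-1/t)), then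
  1 \<le> 2^(R - c e^(-1/t)). For a codec of exponent s, e is of order R^(-s), so the exponent
  behaves like R - c' R^(s/t), which is negative for large R as soon as s > t > s0.\<close>

lemma (in finite_measure) measure_space_le_card_mult_of_cover:
  fixes q :: real
  assumes "finite I" "\<And>i. i \<in> I \<Longrightarrow> A i \<in> sets M" "space M \<subseteq> (\<Union>i\<in>I. A i)"
    and "\<And>i. i \<in> I \<Longrightarrow> measure M (A i) \<le> q"
  shows "measure M (space M) \<le> card I * q"
proof -
  have "measure M (space M) \<le> measure M (\<Union>i\<in>I. A i)"
    using assms(1-3) by (intro finite_measure_mono sets.finite_UN) auto
  also have "\<dots> \<le> (\<Sum>i\<in>I. measure M (A i))"
    using assms(1,2) by (intro finite_measure_subadditive_finite) auto
  also have "\<dots> \<le> (\<Sum>i\<in>I. q)"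
    using assms(4) by (intro sum_mono)
  finally show ?thesis by simp
qed

lemma cball_inter_in_restrict_borel:
  fixes y :: "'a::metric_space"
  assumes "sets P = sets (restrict_space borel S)"
  shows "S \<inter> cball y e \<in> sets P"
  using assms by (auto simp: sets_restrict_space intro!: imageI borel_closed)

lemma prob_le_codebook_mult_ball_mass:
  fixes S :: "'a::real_normed_vector set"
  assumes "prob_space P" "space P = S" "sets P = sets (restrict_space borel S)"
    and "is_codec S E"
    and "\<And>x. x \<in> S \<Longrightarrow> norm (x - D R (E R x)) \<le> e"
    and "\<And>y. measure P (S \<inter> cball y e) \<le> q"
  shows "1 \<le> 2 ^ R * q"
proof -
  interpret prob_space P by fact
  define W where "W = {w :: bool list. length w = R}"
  have "finite W" "card W = 2 ^ R"
    unfolding W_def using finite_lists_length_eq[of "UNIV :: bool set" R]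
      card_lists_length_eq[of "UNIV :: bool set" R] by auto
  have "space P \<subseteq> (\<Union>w\<in>W. S \<inter> cball (D R w) e)"
  proof
    fix x assume "x \<in> space P"
    then have "x \<in> S" "E R x \<in> W" "dist (D R (E R x)) x \<le> e"
      using assms(2,4,5) by (auto simp: is_codec_def W_def dist_norm norm_minus_commute)
    then show "x \<in> (\<Union>w\<in>W. S \<inter> cball (D R w) e)" by auto
  qed
  then have "measure P (space P) \<le> card W * q"
    using \<open>finite W\<close> assms(6) cball_inter_in_restrict_borel[OF assms(3)]
    by (intro measure_space_le_card_mult_of_cover)
  then show ?thesis using \<open>card W = 2 ^ R\<close> prob_space by simp
qed

lemma norm_sub_decode_le_of_rate:
  assumes "R \<ge> 1" "x \<in> S"
    and "ereal (real R powr s) * distortion S E D R \<le> ereal C"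
  shows "norm (x - D R (E R x)) \<le> C / real R powr s"
proof -
  have "ereal (norm (x - D R (E R x))) \<le> distortion S E D R"
    unfolding distortion_def using assms(2) by (intro SUP_upper)
  then have "ereal (real R powr s) * ereal (norm (x - D R (E R x))) \<le> ereal C"
    using assms(3) by (meson ereal_mult_left_mono ereal_less_eq(5) order_trans powr_ge_zero)
  moreover have "real R powr s > 0" using assms(1) by simp
  ultimately show ?thesis by (simp add: field_simps)
qed

lemma eventually_rate_beats_growth:
  fixes c C s t e0 :: real
  assumes "c > 0" "C > 0" "t > 0" "s > t" "e0 > 0"
  shows "eventually (\<lambda>R::nat. C / real R powr s < e0 \<and>
           real R < c * (C / real R powr s) powr (-1/t)) sequentially"
  using assms by (intro eventually_conj) real_asymp+

lemma codec_exponent_le_growth_order: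
  fixes S :: "'a::real_normed_vector set"
  assumes "prob_space P" "space P = S" "sets P = sets (restrict_space borel S)"
    and "s0 \<ge> 0" "has_growth_order S P s0"
    and "is_codec S E"
    and rate: "\<And>R::nat. R \<ge> 1 \<Longrightarrow> ereal (real R powr s) * distortion S E D R \<le> ereal C"
  shows "s \<le> s0"
proof (rule ccontr)
  assume "\<not> s \<le> s0"
  define t where "t = (s0 + s) / 2"
  have t: "s0 < t" "t < s" "0 < t" using \<open>\<not> s \<le> s0\<close> \<open>s0 \<ge> 0\<close> by (auto simp: t_def)
  obtain e0 c where "e0 > 0" "c > 0" and growth: "\<And>y e. 0 < e \<Longrightarrow> e < e0 \<Longrightarrow>
      measure P (S \<inter> cball y e) \<le> 2 powr (- c * e powr (-1 / t))"
    using assms(5) t(1) unfolding has_growth_order_def by blast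
  have "S \<noteq> {}" using prob_space.prob_space[OF assms(1)] assms(2) by auto
  then obtain x where "x \<in> S" by auto
  have "norm (x - D 1 (E 1 x)) \<le> C"
    using norm_sub_decode_le_of_rate[OF _ \<open>x \<in> S\<close> rate, of 1] by simp
  then have "C \<ge> 0" by (meson norm_ge_zero order_trans)
  \<comment> \<open>C + 1 instead of C keeps the radius positive even for a lossless codec.\<close>
  obtain R :: nat where "R \<ge> 1" and R: "(C + 1) / real R powr s < e0"
      "real R < c * ((C + 1) / real R powr s) powr (-1/t)"
    using eventually_conj[OF eventually_ge_at_top[of 1]
        eventually_rate_beats_growth[of c "C + 1" t s e0]]
      \<open>e0 > 0\<close> \<open>c > 0\<close> \<open>C \<ge> 0\<close> t unfolding eventually_sequentially by auto
  define e where "e = (C + 1) / real R powr s"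
  have "e > 0" using \<open>C \<ge> 0\<close> \<open>R \<ge> 1\<close> by (simp add: e_def)
  have "norm (x - D R (E R x)) \<le> e" if "x \<in> S" for x
    using norm_sub_decode_le_of_rate[OF \<open>R \<ge> 1\<close> that rate[OF \<open>R \<ge> 1\<close>]]
    by (simp add: e_def divide_right_mono order_trans)
  then have "1 \<le> 2 ^ R * 2 powr (- c * e powr (-1 / t))"
    using growth \<open>e > 0\<close> R(1)
    by (intro prob_le_codebook_mult_ball_mass[OF assms(1-3,6)]) (auto simp: e_def)
  also have "\<dots> = 2 powr (real R - c * e powr (-1 / t))"
    by (simp add: powr_realpow[symmetric] powr_add[symmetric])
  also have "\<dots> < 2 powr 0"
    using R(2) by (intro powr_less_mono) (auto simp: e_def)
  finally show False by simp
qed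

theorem corollary2p5:
  fixes S :: "'a::banach set" and P :: "'a measure" and s0 :: real
  assumes "prob_space P"
    and "space P = S"
    and "sets P = sets (restrict_space borel S)"
    and "s0 \<ge> 0"
    and "has_growth_order S P s0"
  shows "ereal s0 \<ge> optimal_exponent S"
  unfolding optimal_exponent_def
proof (rule Sup_least)
  fix z
  assume "z \<in> insert 0 {ereal s | s. s \<ge> 0 \<and> (\<exists>E D. is_codec S E \<and>
      (\<exists>C::real. \<forall>R::nat. R \<ge> 1 \<longrightarrow> ereal (real R powr s) * distortion S E D R \<le> ereal C))}"
  then show "z \<le> ereal s0"
    using codec_exponent_le_growth_order[OF assms] assms(4) by fastforce
qed

end
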